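(* Let $\alpha=\omega^{\delta_n}s_n+\dots+\omega^{\delta_1}s_1+m$ be an infinite ordinal written in Cantor normal form, where $n,s_1,\dots,s_n\in\mathbb N=\{1,2,\dots\}$, $0<\delta_1<\dots<\delta_n$ and $m\in\omega$. Then $\mathbb P(\alpha)\cong\prod_{i=1}^n(\mathbb P(\omega^{\delta_i}))^{s_i}$, $\mathrm{sm}\,\mathbb P(\alpha)\cong\prod_{i=1}^n(\mathrm{sm}\,\mathbb P(\omega^{\delta_i}))^{s_i}$ and $\mathrm{sq}\,\mathbb P(\alpha)\cong\prod_{i=1}^n(\mathrm{sq}\,\mathbb P(\omega^{\delta_i}))^{s_i}$.
   Context: For an ordinal $X$, $\mathbb P(X)=\{f[X]: f:X\to X \text{ strictly increasing}\}$, ordered by $\subset$ (the poset of copies of $X$). Products of (pre)orders are ordered coordinatewise. For a preorder $\mathbb P=\langle P,\le\rangle$: $p\perp q$ means no $r$ satisfies $r\le p,q$; the separative modification is $\mathrm{sm}(\mathbb P)=\langle P,\le^*\rangle$ with $p\le^* q$ iff $\forall r\le p\,\exists s\le r\ (s\le q)$; the separative quotient $\mathrm{sq}(\mathbb P)$ is the antisymmetric quotient of $\mathrm{sm}(\mathbb P)$ (identify $p,q$ when $p\le^*q\le^*p$). *)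

theory Defs
  imports Main "HOL-Library.FuncSet"
begin

definition strict_incr_on :: "'a rel \<Rightarrow> ('a \<Rightarrow> 'a) \<Rightarrow> bool" where
  "strict_incr_on r f \<longleftrightarrow>
     (\<forall>x\<in>Field r. f x \<in> Field r) \<and>
     (\<forall>x\<in>Field r. \<forall>y\<in>Field r. (x, y) \<in> r \<and> x \<noteq> y \<longrightarrow> (f x, f y) \<in> r \<and> f x \<noteq> f y)"

definition copies :: "'a rel \<Rightarrow> 'a set set" where
  "copies r = {f ` Field r | f. strict_incr_on r f}"

text \<open>omega^delta is the set of finitely supported functions from Field delta to nat,
  where f < g iff at the delta-largest point of difference x, f x < g x.\<close>

definition omega_exp_carrier :: "'d rel \<Rightarrow> ('d \<Rightarrow> nat) set" where
  "omega_exp_carrier d = {f. finite {x. f x \<noteq> 0} \<and> (\<forall>x. x \<notin> Field d \<longrightarrow> f x = 0)}"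

definition omega_exp_less :: "'d rel \<Rightarrow> ('d \<Rightarrow> nat) \<Rightarrow> ('d \<Rightarrow> nat) \<Rightarrow> bool" where
  "omega_exp_less d f g \<longleftrightarrow>
     (\<exists>x\<in>Field d. f x < g x \<and> (\<forall>y. (x, y) \<in> d \<and> y \<noteq> x \<longrightarrow> f y = g y))"

definition omega_exp :: "'d rel \<Rightarrow> ('d \<Rightarrow> nat) rel" where
  "omega_exp d = {(f, g). f \<in> omega_exp_carrier d \<and> g \<in> omega_exp_carrier d \<and>
                          (f = g \<or> omega_exp_less d f g)}"

text \<open>Ordinal sum of blocks: the block with key (i,j), 1 \<le> i \<le> n, 1 \<le> j \<le> s i, is a copy of
  omega^(delta i); keys are ordered with larger i first and then increasing j; the final
  m points are keys (0,j), 1 \<le> j \<le> m, each a single point.\<close>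

definition cnf_field :: "(nat \<Rightarrow> 'd rel) \<Rightarrow> (nat \<Rightarrow> nat) \<Rightarrow> nat \<Rightarrow> nat \<Rightarrow> (nat \<times> nat \<times> ('d \<Rightarrow> nat)) set" where
  "cnf_field d s n m =
     {(i, j, f). (1 \<le> i \<and> i \<le> n \<and> 1 \<le> j \<and> j \<le> s i \<and> f \<in> omega_exp_carrier (d i))
               \<or> (i = 0 \<and> 1 \<le> j \<and> j \<le> m \<and> f = (\<lambda>_. 0))}"

definition cnf_key_less :: "nat \<times> nat \<Rightarrow> nat \<times> nat \<Rightarrow> bool" where
  "cnf_key_less k k' \<longleftrightarrow> fst k > fst k' \<or> (fst k = fst k' \<and> snd k < snd k')"

definition cnf_ord :: "(nat \<Rightarrow> 'd rel) \<Rightarrow> (nat \<Rightarrow> nat) \<Rightarrow> nat \<Rightarrow> nat \<Rightarrow> (nat \<times> nat \<times> ('d \<Rightarrow> nat)) rel" where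
  "cnf_ord d s n m =
     {((i, j, f), (i', j', f')).
        (i, j, f) \<in> cnf_field d s n m \<and> (i', j', f') \<in> cnf_field d s n m \<and>
        (cnf_key_less (i, j) (i', j') \<or>
         ((i, j) = (i', j') \<and> (f, f') \<in> omega_exp (d i)))}"

definition pre_iso :: "'a set \<Rightarrow> ('a \<Rightarrow> 'a \<Rightarrow> bool) \<Rightarrow> 'b set \<Rightarrow> ('b \<Rightarrow> 'b \<Rightarrow> bool) \<Rightarrow> bool" where
  "pre_iso P le Q le' \<longleftrightarrow>
     (\<exists>h. bij_betw h P Q \<and> (\<forall>x\<in>P. \<forall>y\<in>P. le x y \<longleftrightarrow> le' (h x) (h y)))"

definition prod_carrier :: "'k set \<Rightarrow> ('k \<Rightarrow> 'a set) \<Rightarrow> ('k \<Rightarrow> 'a) set" where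
  "prod_carrier J P = PiE J P"

definition prod_le :: "'k set \<Rightarrow> ('k \<Rightarrow> 'a \<Rightarrow> 'a \<Rightarrow> bool) \<Rightarrow> ('k \<Rightarrow> 'a) \<Rightarrow> ('k \<Rightarrow> 'a) \<Rightarrow> bool" where
  "prod_le J le x y \<longleftrightarrow> (\<forall>k\<in>J. le k (x k) (y k))"

definition sm_le :: "'a set \<Rightarrow> ('a \<Rightarrow> 'a \<Rightarrow> bool) \<Rightarrow> 'a \<Rightarrow> 'a \<Rightarrow> bool" where
  "sm_le P le p q \<longleftrightarrow> (\<forall>r\<in>P. le r p \<longrightarrow> (\<exists>s\<in>P. le s r \<and> le s q))"

definition sq_class :: "'a set \<Rightarrow> ('a \<Rightarrow> 'a \<Rightarrow> bool) \<Rightarrow> 'a \<Rightarrow> 'a set" where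
  "sq_class P le p = {q\<in>P. sm_le P le p q \<and> sm_le P le q p}"

definition sq_carrier :: "'a set \<Rightarrow> ('a \<Rightarrow> 'a \<Rightarrow> bool) \<Rightarrow> 'a set set" where
  "sq_carrier P le = sq_class P le ` P"

definition sq_le :: "'a set \<Rightarrow> ('a \<Rightarrow> 'a \<Rightarrow> bool) \<Rightarrow> 'a set \<Rightarrow> 'a set \<Rightarrow> bool" where
  "sq_le P le A B \<longleftrightarrow> (\<exists>p\<in>A. \<exists>q\<in>B. sm_le P le p q)"

text \<open>Index set of the product \<Prod>_{i=1}^n (\<dots>)^{s_i}.\<close>

definition cnf_index :: "(nat \<Rightarrow> nat) \<Rightarrow> nat \<Rightarrow> (nat \<times> nat) set" where
  "cnf_index s n = {(i, j). 1 \<le> i \<and> i \<le> n \<and> 1 \<le> j \<and> j \<le> s i}"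

end

theory Submission
  imports Defs
begin

text \<open>
  A strictly increasing self-map \<open>f\<close> of a well-order is inflationary. Split
  \<open>\<alpha> = \<omega>^\<delta>\<^sub>n s\<^sub>n + \<dots> + \<omega>^\<delta>\<^sub>1 s\<^sub>1 + m\<close> into blocks, one copy of \<open>\<omega>^\<delta>\<^sub>i\<close> for each of
  the \<open>s\<^sub>i\<close> summands and single points at the end. Then \<open>f\<close> maps every block into itself:
  arguing from the last block backwards, let \<open>y\<close> be the first point after the block of \<open>x\<close>;
  \<open>f y\<close> stays in the block of \<open>y\<close>, so if \<open>f x \<ge> y\<close> the tail of the block of \<open>x\<close>, a copy of
  \<open>\<omega>^\<delta>\<^sub>i\<close>, is mapped strictly increasingly below \<open>f y\<close> into a copy of \<open>\<omega>^\<delta>\<^sub>i\<^sub>'\<close> with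
  \<open>\<delta>\<^sub>i\<^sub>' \<le> \<delta>\<^sub>i\<close>, which is impossible. Hence a copy of \<open>\<alpha>\<close> is the union of arbitrary copies of the
  blocks together with the last \<open>m\<close> points, which gives \<open>\<bbbP>(\<alpha>) \<cong> \<Prod>\<^sub>i \<bbbP>(\<omega>^\<delta>\<^sub>i)^s\<^sub>i\<close>. Separative
  modifications and quotients are invariant under isomorphism and commute with products.
\<close>

section \<open>Well-orders and their copies\<close>

lemma Well_order_refl: "Well_order r \<Longrightarrow> x \<in> Field r \<Longrightarrow> (x, x) \<in> r"
  by (metis wo_rel.REFL wo_rel_def refl_onD)

lemma Well_order_total: "Well_order r \<Longrightarrow> x \<in> Field r \<Longrightarrow> y \<in> Field r \<Longrightarrow> (x, y) \<in> r \<or> (y, x) \<in> r"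
  by (metis wo_rel.TOTALS wo_rel_def)

lemma Well_order_antisym: "Well_order r \<Longrightarrow> (x, y) \<in> r \<Longrightarrow> (y, x) \<in> r \<Longrightarrow> x = y"
  by (metis wo_rel.ANTISYM wo_rel_def antisymD)

lemma Well_order_trans: "Well_order r \<Longrightarrow> (x, y) \<in> r \<Longrightarrow> (y, z) \<in> r \<Longrightarrow> (x, z) \<in> r"
  by (metis wo_rel.TRANS wo_rel_def transD)

lemma Well_order_has_least:
  assumes "Well_order r" "B \<subseteq> Field r" "B \<noteq> {}"
  obtains b where "b \<in> B" "\<And>b'. b' \<in> B \<Longrightarrow> (b, b') \<in> r"
  using wo_rel.Well_order_isMinim_exists[of r B] assms
  by (auto simp: wo_rel_def wo_rel.isMinim_def)

lemma Well_order_finite_has_greatest: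
  assumes W: "Well_order r"
  shows "finite B \<Longrightarrow> B \<noteq> {} \<Longrightarrow> B \<subseteq> Field r \<Longrightarrow> \<exists>b\<in>B. \<forall>b'\<in>B. (b', b) \<in> r"
proof (induction B rule: finite_ne_induct)
  case (singleton x)
  then show ?case using Well_order_refl[OF W] by auto
next
  case (insert x B)
  then obtain b where b: "b \<in> B" "\<forall>b'\<in>B. (b', b) \<in> r" by auto
  show ?case
  proof (cases "(x, b) \<in> r")
    case True
    then show ?thesis using b by auto
  next
    case False
    then have "(b, x) \<in> r" using Well_order_total[OF W, of x b] insert b by auto
    then show ?thesis using b insert Well_order_refl[OF W] Well_order_trans[OF W] by blast
  qed
qed

lemma strict_incr_onD:
  assumes "strict_incr_on r f"
  shows "x \<in> Field r \<Longrightarrow> f x \<in> Field r"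
    and "x \<in> Field r \<Longrightarrow> y \<in> Field r \<Longrightarrow> (x, y) \<in> r \<Longrightarrow> x \<noteq> y \<Longrightarrow> (f x, f y) \<in> r"
    and "x \<in> Field r \<Longrightarrow> y \<in> Field r \<Longrightarrow> (x, y) \<in> r \<Longrightarrow> x \<noteq> y \<Longrightarrow> f x \<noteq> f y"
  using assms unfolding strict_incr_on_def by auto

lemma strict_incr_on_inflationary:
  assumes W: "Well_order r" and f: "strict_incr_on r f"
  shows "x \<in> Field r \<Longrightarrow> (x, f x) \<in> r"
proof (induction x rule: wf_induct[OF wo_rel.WF[unfolded wo_rel_def, OF W]])
  case (1 x)
  show ?case
  proof (rule ccontr)
    assume "(x, f x) \<notin> r"
    moreover have fx: "f x \<in> Field r" using strict_incr_onD(1)[OF f 1(2)] .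
    ultimately have "(f x, x) \<in> r" "f x \<noteq> x"
      using Well_order_total[OF W 1(2) fx] Well_order_refl[OF W 1(2)] by auto
    then have "(f x, f (f x)) \<in> r" and "(f (f x), f x) \<in> r" "f (f x) \<noteq> f x"
      using 1 fx strict_incr_onD(2,3)[OF f fx 1(2)] by auto
    then show False using Well_order_antisym[OF W] by blast
  qed
qed

lemma copies_subset_Field: "C \<in> copies r \<Longrightarrow> C \<subseteq> Field r"
  unfolding copies_def strict_incr_on_def by auto

lemma order_iso_inv_into:
  assumes h: "bij_betw h A B" and ord: "\<forall>a\<in>A. \<forall>b\<in>A. (a, b) \<in> r \<longleftrightarrow> (h a, h b) \<in> r'"
  shows "bij_betw (inv_into A h) B A"
    and "\<forall>a\<in>B. \<forall>b\<in>B. (a, b) \<in> r' \<longleftrightarrow> (inv_into A h a, inv_into A h b) \<in> r"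
proof -
  show hinv: "bij_betw (inv_into A h) B A" by (rule bij_betw_inv_into[OF h])
  have "h (inv_into A h b) = b" if "b \<in> B" for b
    using h that by (simp add: bij_betw_def f_inv_into_f)
  then show "\<forall>a\<in>B. \<forall>b\<in>B. (a, b) \<in> r' \<longleftrightarrow> (inv_into A h a, inv_into A h b) \<in> r"
    using ord hinv by (metis bij_betwE)
qed

lemma image_copy_order_iso:
  assumes h: "bij_betw h (Field r) (Field r')"
    and ord: "\<forall>a\<in>Field r. \<forall>b\<in>Field r. (a, b) \<in> r \<longleftrightarrow> (h a, h b) \<in> r'"
    and C: "C \<in> copies r"
  shows "h ` C \<in> copies r'"
proof -
  obtain f where f: "strict_incr_on r f" and Cf: "C = f ` Field r"
    using C unfolding copies_def by auto
  let ?g = "inv_into (Field r) h"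
  have g: "bij_betw ?g (Field r') (Field r)"
    and g_ord: "\<forall>a\<in>Field r'. \<forall>b\<in>Field r'. (a, b) \<in> r' \<longleftrightarrow> (?g a, ?g b) \<in> r"
    using order_iso_inv_into[OF h ord] by auto
  have hg: "h (?g y) = y" if "y \<in> Field r'" for y
    using h that by (simp add: bij_betw_def f_inv_into_f)
  have "strict_incr_on r' (h \<circ> f \<circ> ?g)"
    unfolding strict_incr_on_def
  proof (intro conjI ballI impI)
    fix x assume "x \<in> Field r'"
    then show "(h \<circ> f \<circ> ?g) x \<in> Field r'"
      using g h strict_incr_onD(1)[OF f] by (metis bij_betwE comp_apply)
  next
    fix x y assume xy: "x \<in> Field r'" "y \<in> Field r'" "(x, y) \<in> r' \<and> x \<noteq> y"
    then have "?g x \<in> Field r" "?g y \<in> Field r" "(?g x, ?g y) \<in> r" "?g x \<noteq> ?g y"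
      using g g_ord hg by (metis bij_betwE)+
    then have "(f (?g x), f (?g y)) \<in> r" "f (?g x) \<noteq> f (?g y)" "f (?g x) \<in> Field r" "f (?g y) \<in> Field r"
      using strict_incr_onD[OF f] by auto
    then show "((h \<circ> f \<circ> ?g) x, (h \<circ> f \<circ> ?g) y) \<in> r'" "(h \<circ> f \<circ> ?g) x \<noteq> (h \<circ> f \<circ> ?g) y"
      using ord h by (auto simp: bij_betw_def inj_on_def)
  qed
  moreover have "(h \<circ> f \<circ> ?g) ` Field r' = h ` C"
  proof -
    have "(h \<circ> f \<circ> ?g) ` Field r' = h ` f ` ?g ` Field r'" by (simp add: image_comp)
    then show ?thesis using g unfolding Cf bij_betw_def by simp
  qed
  ultimately show ?thesis unfolding copies_def by (metis (mono_tags, lifting) mem_Collect_eq)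
qed

lemma pre_iso_image_subset:
  assumes "inj_on h (\<Union>\<P>)"
  shows "pre_iso \<P> (\<subseteq>) ((`) h ` \<P>) (\<subseteq>)"
proof -
  have ord: "A \<subseteq> B \<longleftrightarrow> h ` A \<subseteq> h ` B" if "A \<in> \<P>" "B \<in> \<P>" for A B
    using inj_on_image_mem_iff[OF assms] that by (metis Union_upper image_subset_iff subset_iff)
  then have "inj_on ((`) h) \<P>" by (intro inj_onI) (metis subset_antisym order_refl)
  then show ?thesis unfolding pre_iso_def bij_betw_def using ord by blast
qed

lemma copies_iso:
  assumes "iso r r' h"
  shows "pre_iso (copies r) (\<subseteq>) (copies r') (\<subseteq>)"
proof -
  have h: "bij_betw h (Field r) (Field r')"
    and ord: "\<forall>a\<in>Field r. \<forall>b\<in>Field r. (a, b) \<in> r \<longleftrightarrow> (h a, h b) \<in> r'"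
    using assms unfolding iso_iff2 by auto
  let ?g = "inv_into (Field r) h"
  have "(`) h ` copies r = copies r'"
  proof
    show "(`) h ` copies r \<subseteq> copies r'" using image_copy_order_iso[OF h ord] by auto
  next
    show "copies r' \<subseteq> (`) h ` copies r"
    proof
      fix D assume D: "D \<in> copies r'"
      have "?g ` D \<in> copies r" using image_copy_order_iso[OF order_iso_inv_into[OF h ord] D] .
      moreover have "h ` ?g ` D = D"
        using copies_subset_Field[OF D] h by (force simp: bij_betw_def image_iff f_inv_into_f)
      ultimately show "D \<in> (`) h ` copies r" by (metis image_eqI)
    qed
  qed
  moreover have "inj_on h (\<Union>(copies r))"
    using h copies_subset_Field by (meson Sup_le_iff bij_betw_def inj_on_subset)
  ultimately show ?thesis using pre_iso_image_subset by metis
qed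

lemma pre_iso_trans:
  assumes "pre_iso P le Q le'" and "pre_iso Q le' R le''"
  shows "pre_iso P le R le''"
proof -
  obtain h where h: "bij_betw h P Q" "\<forall>x\<in>P. \<forall>y\<in>P. le x y \<longleftrightarrow> le' (h x) (h y)"
    using assms(1) unfolding pre_iso_def by auto
  obtain g where g: "bij_betw g Q R" "\<forall>x\<in>Q. \<forall>y\<in>Q. le' x y \<longleftrightarrow> le'' (g x) (g y)"
    using assms(2) unfolding pre_iso_def by auto
  have "\<forall>x\<in>P. \<forall>y\<in>P. le x y \<longleftrightarrow> le'' (g (h x)) (g (h y))"
    using h g by (auto dest: bij_betwE)
  then show ?thesis
    unfolding pre_iso_def using bij_betw_trans[OF h(1) g(1)] by (auto simp: comp_def)
qed

section \<open>Separative modification and separative quotient\<close>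

lemma sm_le_transfer:
  assumes h: "bij_betw h P Q" and ord: "\<forall>x\<in>P. \<forall>y\<in>P. le x y \<longleftrightarrow> le' (h x) (h y)"
    and "x \<in> P" "y \<in> P"
  shows "sm_le P le x y \<longleftrightarrow> sm_le Q le' (h x) (h y)"
proof -
  have "Q = h ` P" using h by (simp add: bij_betw_def)
  then show ?thesis unfolding sm_le_def using ord assms(3,4) by blast
qed

lemma pre_iso_sm:
  assumes "pre_iso P le Q le'"
  shows "pre_iso P (sm_le P le) Q (sm_le Q le')"
proof -
  obtain h where h: "bij_betw h P Q" and ord: "\<forall>x\<in>P. \<forall>y\<in>P. le x y \<longleftrightarrow> le' (h x) (h y)"
    using assms unfolding pre_iso_def by blast
  show ?thesis unfolding pre_iso_def using h sm_le_transfer[OF h ord] by blast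
qed

locale carrier_preorder =
  fixes P :: "'a set" and le :: "'a \<Rightarrow> 'a \<Rightarrow> bool"
  assumes refl: "x \<in> P \<Longrightarrow> le x x"
    and trans: "x \<in> P \<Longrightarrow> y \<in> P \<Longrightarrow> z \<in> P \<Longrightarrow> le x y \<Longrightarrow> le y z \<Longrightarrow> le x z"
begin

lemma sm_le_refl: "p \<in> P \<Longrightarrow> sm_le P le p p"
  unfolding sm_le_def using refl by blast

lemma sm_le_trans:
  assumes "p \<in> P" "q \<in> P" "t \<in> P" "sm_le P le p q" "sm_le P le q t"
  shows "sm_le P le p t"
  unfolding sm_le_def
proof (intro ballI impI)
  fix x assume x: "x \<in> P" "le x p"
  then obtain y where y: "y \<in> P" "le y x" "le y q" using assms(4) unfolding sm_le_def by blast
  then obtain z where "z \<in> P" "le z y" "le z t" using assms(5) unfolding sm_le_def by blast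
  then show "\<exists>z\<in>P. le z x \<and> le z t" using trans x y by blast
qed

lemma sq_class_self: "p \<in> P \<Longrightarrow> p \<in> sq_class P le p"
  unfolding sq_class_def using sm_le_refl by auto

lemma sq_class_eq_iff:
  assumes "p \<in> P" "q \<in> P"
  shows "sq_class P le p = sq_class P le q \<longleftrightarrow> sm_le P le p q \<and> sm_le P le q p"
proof
  assume "sq_class P le p = sq_class P le q"
  then have "q \<in> sq_class P le p" using sq_class_self[OF assms(2)] by simp
  then show "sm_le P le p q \<and> sm_le P le q p" unfolding sq_class_def by auto
next
  assume "sm_le P le p q \<and> sm_le P le q p"
  then show "sq_class P le p = sq_class P le q"
    unfolding sq_class_def using sm_le_trans assms by blast
qed

lemma sq_le_sq_class_iff:
  assumes "p \<in> P" "q \<in> P"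
  shows "sq_le P le (sq_class P le p) (sq_class P le q) \<longleftrightarrow> sm_le P le p q"
proof
  assume "sq_le P le (sq_class P le p) (sq_class P le q)"
  then obtain p' q' where "p' \<in> P" "q' \<in> P" "sm_le P le p p'" "sm_le P le p' q'" "sm_le P le q' q"
    unfolding sq_le_def sq_class_def by blast
  then show "sm_le P le p q" using sm_le_trans assms by metis
next
  assume "sm_le P le p q"
  then show "sq_le P le (sq_class P le p) (sq_class P le q)"
    unfolding sq_le_def using sq_class_self assms by blast
qed

lemma pre_iso_sq_carrierI:
  assumes onto: "\<Phi> ` P = Q"
    and le': "\<And>x y. x \<in> P \<Longrightarrow> y \<in> P \<Longrightarrow> le' (\<Phi> x) (\<Phi> y) \<longleftrightarrow> sm_le P le x y"
    and eq: "\<And>x y. x \<in> P \<Longrightarrow> y \<in> P \<Longrightarrow> sm_le P le x y \<Longrightarrow> sm_le P le y x \<Longrightarrow> \<Phi> x = \<Phi> y"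
  shows "pre_iso (sq_carrier P le) (sq_le P le) Q le'"
proof -
  let ?cl = "sq_class P le"
  define \<Psi> where "\<Psi> A = \<Phi> (SOME p. p \<in> A)" for A
  have \<Psi>: "\<Psi> (?cl p) = \<Phi> p" if p: "p \<in> P" for p
  proof -
    have "(SOME p'. p' \<in> ?cl p) \<in> ?cl p" using sq_class_self[OF p] by (rule someI)
    then show ?thesis unfolding \<Psi>_def sq_class_def using eq p by blast
  qed
  have \<Phi>_eq: "\<Phi> x = \<Phi> y \<longleftrightarrow> ?cl x = ?cl y" if "x \<in> P" "y \<in> P" for x y
    using that le' eq sq_class_eq_iff sm_le_refl by metis
  have "\<Psi> ` sq_carrier P le = Q"
    unfolding sq_carrier_def image_image onto[symmetric] by (rule image_cong) (simp_all add: \<Psi>)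
  moreover have "inj_on \<Psi> (sq_carrier P le)"
    unfolding sq_carrier_def inj_on_def by (auto simp: \<Psi> \<Phi>_eq)
  ultimately have "bij_betw \<Psi> (sq_carrier P le) Q" by (simp add: bij_betw_def)
  moreover have "sq_le P le A B \<longleftrightarrow> le' (\<Psi> A) (\<Psi> B)"
    if "A \<in> sq_carrier P le" "B \<in> sq_carrier P le" for A B
    using that \<Psi> le' sq_le_sq_class_iff unfolding sq_carrier_def by auto
  ultimately show ?thesis unfolding pre_iso_def by blast
qed

end

lemma carrier_preorder_subset: "carrier_preorder P (\<subseteq>)"
  by unfold_locales auto

lemma carrier_preorder_prod:
  assumes "\<And>k. k \<in> J \<Longrightarrow> carrier_preorder (P k) (le k)"
  shows "carrier_preorder (PiE J P) (prod_le J le)"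
proof
  fix x y z assume "x \<in> PiE J P" "y \<in> PiE J P" "z \<in> PiE J P"
    "prod_le J le x y" "prod_le J le y z"
  then show "prod_le J le x z"
    unfolding prod_le_def using carrier_preorder.trans[OF assms] by (meson PiE_mem)
qed (auto simp: prod_le_def intro: carrier_preorder.refl[OF assms] dest: PiE_mem)

lemma pre_iso_sq:
  assumes iso: "pre_iso P le Q le'" and "carrier_preorder P le" and Q: "carrier_preorder Q le'"
  shows "pre_iso (sq_carrier P le) (sq_le P le) (sq_carrier Q le') (sq_le Q le')"
proof -
  interpret P: carrier_preorder P le by fact
  interpret Q: carrier_preorder Q le' by fact
  obtain h where h: "bij_betw h P Q" and ord: "\<forall>x\<in>P. \<forall>y\<in>P. le x y \<longleftrightarrow> le' (h x) (h y)"
    using iso unfolding pre_iso_def by blast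
  have hP: "x \<in> P \<Longrightarrow> h x \<in> Q" for x using h bij_betwE by blast
  show ?thesis
  proof (rule P.pre_iso_sq_carrierI[of "sq_class Q le' \<circ> h"])
    show "(sq_class Q le' \<circ> h) ` P = sq_carrier Q le'"
      using h unfolding sq_carrier_def bij_betw_def image_comp[symmetric] by simp
  qed (use hP sm_le_transfer[OF h ord] Q.sq_le_sq_class_iff Q.sq_class_eq_iff in auto)
qed

lemma sm_le_prod_iff:
  assumes refl: "\<And>k x. k \<in> J \<Longrightarrow> x \<in> P k \<Longrightarrow> le k x x"
    and p: "p \<in> PiE J P" and q: "q \<in> PiE J P"
  shows "sm_le (PiE J P) (prod_le J le) p q \<longleftrightarrow> prod_le J (\<lambda>k. sm_le (P k) (le k)) p q"
proof
  assume sm: "sm_le (PiE J P) (prod_le J le) p q"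
  show "prod_le J (\<lambda>k. sm_le (P k) (le k)) p q"
    unfolding prod_le_def sm_le_def
  proof (intro ballI impI)
    fix k x assume k: "k \<in> J" and x: "x \<in> P k" "le k x (p k)"
    have "p(k := x) \<in> PiE J P" using p x k by (auto simp: PiE_iff extensional_def)
    moreover have "prod_le J le (p(k := x)) p" using x refl p unfolding prod_le_def by auto
    ultimately obtain t where "t \<in> PiE J P" "prod_le J le t (p(k := x))" "prod_le J le t q"
      using sm unfolding sm_le_def by blast
    then show "\<exists>y\<in>P k. le k y x \<and> le k y (q k)"
      using k unfolding prod_le_def by (metis PiE_mem fun_upd_same)
  qed
next
  assume sm: "prod_le J (\<lambda>k. sm_le (P k) (le k)) p q"
  show "sm_le (PiE J P) (prod_le J le) p q"
    unfolding sm_le_def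
  proof (intro ballI impI)
    fix x assume x: "x \<in> PiE J P" "prod_le J le x p"
    have "\<forall>k\<in>J. \<exists>y\<in>P k. le k y (x k) \<and> le k y (q k)"
      using sm x unfolding prod_le_def sm_le_def by (metis PiE_mem)
    then obtain t where "\<forall>k\<in>J. t k \<in> P k \<and> le k (t k) (x k) \<and> le k (t k) (q k)"
      by (metis (no_types) bchoice)
    then show "\<exists>t\<in>PiE J P. prod_le J le t x \<and> prod_le J le t q"
      unfolding prod_le_def by (intro bexI[of _ "restrict t J"]) auto
  qed
qed

lemma pre_iso_sm_prod:
  assumes "\<And>k x. k \<in> J \<Longrightarrow> x \<in> P k \<Longrightarrow> le k x x"
  shows "pre_iso (PiE J P) (sm_le (PiE J P) (prod_le J le)) (PiE J P) (prod_le J (\<lambda>k. sm_le (P k) (le k)))"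
  unfolding pre_iso_def using sm_le_prod_iff[of J P le, OF assms] by (intro exI[of _ id]) auto

lemma pre_iso_sq_prod:
  assumes pre: "\<And>k. k \<in> J \<Longrightarrow> carrier_preorder (P k) (le k)"
  shows "pre_iso (sq_carrier (PiE J P) (prod_le J le)) (sq_le (PiE J P) (prod_le J le))
           (PiE J (\<lambda>k. sq_carrier (P k) (le k))) (prod_le J (\<lambda>k. sq_le (P k) (le k)))"
proof -
  interpret carrier_preorder "PiE J P" "prod_le J le" by (rule carrier_preorder_prod[OF pre])
  let ?\<Phi> = "\<lambda>p. \<lambda>k\<in>J. sq_class (P k) (le k) (p k)"
  have sm_iff: "sm_le (PiE J P) (prod_le J le) p q \<longleftrightarrow> (\<forall>k\<in>J. sm_le (P k) (le k) (p k) (q k))"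
    if "p \<in> PiE J P" "q \<in> PiE J P" for p q
  proof -
    have "le k x x" if "k \<in> J" "x \<in> P k" for k x by (rule carrier_preorder.refl[OF pre[OF that(1)] that(2)])
    then show ?thesis using sm_le_prod_iff[of J P le, OF _ that] unfolding prod_le_def by blast
  qed
  show ?thesis
  proof (rule pre_iso_sq_carrierI[of ?\<Phi>])
    show "?\<Phi> ` PiE J P = PiE J (\<lambda>k. sq_carrier (P k) (le k))"
    proof
      show "?\<Phi> ` PiE J P \<subseteq> PiE J (\<lambda>k. sq_carrier (P k) (le k))"
        unfolding sq_carrier_def by (auto dest: PiE_mem)
    next
      show "PiE J (\<lambda>k. sq_carrier (P k) (le k)) \<subseteq> ?\<Phi> ` PiE J P"
      proof
        fix Y assume Y: "Y \<in> PiE J (\<lambda>k. sq_carrier (P k) (le k))"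
        then have "\<forall>k\<in>J. \<exists>p\<in>P k. Y k = sq_class (P k) (le k) p"
          unfolding sq_carrier_def by (auto dest: PiE_mem)
        then obtain p where p: "\<forall>k\<in>J. p k \<in> P k \<and> Y k = sq_class (P k) (le k) (p k)"
          by (metis (no_types) bchoice)
        then have "Y = ?\<Phi> (restrict p J)"
          using Y by (auto simp: PiE_iff extensional_def fun_eq_iff)
        moreover have "restrict p J \<in> PiE J P" using p by auto
        ultimately show "Y \<in> ?\<Phi> ` PiE J P" by blast
      qed
    qed
  next
    fix p q assume pq: "p \<in> PiE J P" "q \<in> PiE J P"
    then have "prod_le J (\<lambda>k. sq_le (P k) (le k)) (?\<Phi> p) (?\<Phi> q) \<longleftrightarrow>
        (\<forall>k\<in>J. sm_le (P k) (le k) (p k) (q k))"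
      unfolding prod_le_def using carrier_preorder.sq_le_sq_class_iff[OF pre] by (simp add: PiE_mem)
    then show "prod_le J (\<lambda>k. sq_le (P k) (le k)) (?\<Phi> p) (?\<Phi> q) \<longleftrightarrow> sm_le (PiE J P) (prod_le J le) p q"
      using sm_iff[OF pq] by simp
  next
    fix p q assume pq: "p \<in> PiE J P" "q \<in> PiE J P"
      and "sm_le (PiE J P) (prod_le J le) p q" "sm_le (PiE J P) (prod_le J le) q p"
    then show "?\<Phi> p = ?\<Phi> q"
      using sm_iff[OF pq] sm_iff[OF pq(2,1)] carrier_preorder.sq_class_eq_iff[OF pre]
        PiE_mem[OF pq(1)] PiE_mem[OF pq(2)]
      by (intro restrict_ext) blast
  qed
qed

section \<open>The ordinals \<open>\<omega>^\<delta>\<close>\<close>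

lemma Field_omega_exp: "Field (omega_exp d) = omega_exp_carrier d"
  unfolding omega_exp_def Field_def by auto

lemma omega_exp_less_irrefl [simp]: "\<not> omega_exp_less d w w"
  unfolding omega_exp_less_def by auto

lemma in_omega_exp_iff:
  "(w, w') \<in> omega_exp d \<longleftrightarrow>
     w \<in> omega_exp_carrier d \<and> w' \<in> omega_exp_carrier d \<and> (w = w' \<or> omega_exp_less d w w')"
  unfolding omega_exp_def by auto

lemma strict_incr_on_omega_exp_iff:
  "strict_incr_on (omega_exp d) g \<longleftrightarrow>
     (\<forall>w\<in>omega_exp_carrier d. g w \<in> omega_exp_carrier d) \<and>
     (\<forall>w\<in>omega_exp_carrier d. \<forall>w'\<in>omega_exp_carrier d.
        omega_exp_less d w w' \<longrightarrow> omega_exp_less d (g w) (g w'))"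
  unfolding strict_incr_on_def Field_omega_exp in_omega_exp_iff
  by (auto, metis omega_exp_less_irrefl, metis omega_exp_less_irrefl)

lemma zero_in_omega_exp_carrier: "(\<lambda>_. 0) \<in> omega_exp_carrier d"
  unfolding omega_exp_carrier_def by auto

lemma add_in_omega_exp_carrier:
  assumes "u \<in> omega_exp_carrier d" "w \<in> omega_exp_carrier d"
  shows "(\<lambda>z. u z + w z) \<in> omega_exp_carrier d"
proof -
  have "{z. u z + w z \<noteq> 0} \<subseteq> {z. u z \<noteq> 0} \<union> {z. w z \<noteq> 0}" by auto
  then show ?thesis using assms unfolding omega_exp_carrier_def by (auto intro: finite_subset)
qed

lemma omega_exp_less_add_left:
  "omega_exp_less d w w' \<Longrightarrow> omega_exp_less d (\<lambda>z. u z + w z) (\<lambda>z. u z + w' z)"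
  unfolding omega_exp_less_def by auto

text \<open>Adding \<open>w\<close> changes \<open>u\<close> first at the \<open>d\<close>-largest point of the support of \<open>w\<close>.\<close>

lemma omega_exp_le_add:
  assumes d: "Well_order d" and u: "u \<in> omega_exp_carrier d" and w: "w \<in> omega_exp_carrier d"
  shows "(u, \<lambda>z. u z + w z) \<in> omega_exp d"
proof (cases "{z. w z \<noteq> 0} = {}")
  case True
  then show ?thesis using u by (simp add: in_omega_exp_iff)
next
  case False
  have "finite {z. w z \<noteq> 0}" "{z. w z \<noteq> 0} \<subseteq> Field d"
    using w unfolding omega_exp_carrier_def by auto
  then obtain x where x: "w x \<noteq> 0" "\<forall>z. w z \<noteq> 0 \<longrightarrow> (z, x) \<in> d"
    using Well_order_finite_has_greatest[OF d _ False] by auto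
  have "x \<in> Field d" using w x(1) unfolding omega_exp_carrier_def by auto
  moreover have "\<forall>z. (x, z) \<in> d \<and> z \<noteq> x \<longrightarrow> w z = 0" using x(2) Well_order_antisym[OF d] by blast
  ultimately have "omega_exp_less d u (\<lambda>z. u z + w z)"
    unfolding omega_exp_less_def using x(1) by auto
  then show ?thesis using u w add_in_omega_exp_carrier by (simp add: in_omega_exp_iff)
qed

text \<open>The induced embedding moves the support of \<open>w\<close> along the embedding of \<open>d'\<close> into \<open>d\<close>.\<close>

lemma omega_exp_ordLeq_embedding:
  fixes d' :: "'a rel" and d :: "'b rel"
  assumes d': "Well_order d'" and d: "Well_order d" and "(d', d) \<in> ordLeq"
  obtains \<phi> where "\<And>w. w \<in> omega_exp_carrier d' \<Longrightarrow> \<phi> w \<in> omega_exp_carrier d"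
    and "\<And>w w'. omega_exp_less d' w w' \<Longrightarrow> omega_exp_less d (\<phi> w) (\<phi> w')"
proof -
  obtain h where h: "embed d' d h" using assms(3) unfolding ordLeq_def by auto
  have inj: "inj_on h (Field d')" by (rule embed_inj_on[OF d' h])
  have compat: "(a, b) \<in> d' \<Longrightarrow> (h a, h b) \<in> d" for a b
    using embed_compat[OF h] unfolding compat_def by blast
  have hF: "h ` Field d' \<subseteq> Field d" by (rule embed_Field[OF h])
  define \<phi> :: "('a \<Rightarrow> nat) \<Rightarrow> 'b \<Rightarrow> nat"
    where "\<phi> w z = (if z \<in> h ` Field d' then w (inv_into (Field d') h z) else 0)" for w z
  have \<phi>_h: "\<phi> w (h a) = w a" if "a \<in> Field d'" for w a
    unfolding \<phi>_def using inj that by simp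
  show thesis
  proof
    fix w assume w: "w \<in> omega_exp_carrier d'"
    have "{z. \<phi> w z \<noteq> 0} \<subseteq> h ` {a. w a \<noteq> 0}"
      unfolding \<phi>_def using inj by (auto simp: image_iff)
    moreover have "finite (h ` {a. w a \<noteq> 0})" using w unfolding omega_exp_carrier_def by simp
    ultimately have "finite {z. \<phi> w z \<noteq> 0}" by (rule finite_subset)
    then show "\<phi> w \<in> omega_exp_carrier d"
      using hF unfolding omega_exp_carrier_def \<phi>_def by auto
  next
    fix w w' assume "omega_exp_less d' w w'"
    then obtain x where x: "x \<in> Field d'" "w x < w' x" "\<forall>y. (x, y) \<in> d' \<and> y \<noteq> x \<longrightarrow> w y = w' y"
      unfolding omega_exp_less_def by auto
    have "\<phi> w z = \<phi> w' z" if z: "(h x, z) \<in> d" "z \<noteq> h x" for z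
    proof (cases "z \<in> h ` Field d'")
      case True
      then obtain a where a: "a \<in> Field d'" "z = h a" by auto
      then have "(a, x) \<notin> d'" using compat z Well_order_antisym[OF d] by metis
      then have "(x, a) \<in> d' \<and> a \<noteq> x" using Well_order_total[OF d' x(1) a(1)] a z by auto
      then show ?thesis using x(3) a \<phi>_h by simp
    next
      case False
      then show ?thesis unfolding \<phi>_def by simp
    qed
    then show "omega_exp_less d (\<phi> w) (\<phi> w')"
      unfolding omega_exp_less_def using x hF \<phi>_h by (intro bexI[of _ "h x"]) auto
  qed
qed

text \<open>Composing such a map with the embedding of \<open>\<omega>^d'\<close> into \<open>\<omega>^d\<close> would give a strictly
  increasing self-map of \<open>\<omega>^d\<close> that is not inflationary.\<close>

lemma omega_exp_strict_mono_unbounded: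
  assumes W: "Well_order (omega_exp d)" and d': "Well_order d'" and d: "Well_order d"
    and le: "(d', d) \<in> ordLeq"
    and g: "\<And>w. w \<in> omega_exp_carrier d \<Longrightarrow> g w \<in> omega_exp_carrier d'"
    and mono: "\<And>w w'. w \<in> omega_exp_carrier d \<Longrightarrow> w' \<in> omega_exp_carrier d \<Longrightarrow>
                 omega_exp_less d w w' \<Longrightarrow> omega_exp_less d' (g w) (g w')"
    and b: "b \<in> omega_exp_carrier d'"
  shows "\<exists>w\<in>omega_exp_carrier d. \<not> omega_exp_less d' (g w) b"
proof -
  obtain \<phi> where \<phi>: "\<And>w. w \<in> omega_exp_carrier d' \<Longrightarrow> \<phi> w \<in> omega_exp_carrier d"
    and \<phi>_mono: "\<And>w w'. omega_exp_less d' w w' \<Longrightarrow> omega_exp_less d (\<phi> w) (\<phi> w')"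
    using omega_exp_ordLeq_embedding[OF d' d le] by blast
  have "strict_incr_on (omega_exp d) (\<phi> \<circ> g)"
    unfolding strict_incr_on_omega_exp_iff using \<phi> \<phi>_mono g mono by simp
  then have "(\<phi> b, \<phi> (g (\<phi> b))) \<in> omega_exp d"
    using strict_incr_on_inflationary[OF W, of "\<phi> \<circ> g" "\<phi> b"] \<phi>[OF b] by (simp add: Field_omega_exp)
  then have "\<not> omega_exp_less d (\<phi> (g (\<phi> b))) (\<phi> b)"
    using Well_order_antisym[OF W] \<phi>[OF b] g[OF \<phi>[OF b]] \<phi> by (fastforce simp: in_omega_exp_iff)
  then show ?thesis using \<phi>_mono \<phi>[OF b] by blast
qed

section \<open>Copies of an ordinal in Cantor normal form\<close>

definition block_key :: "nat \<times> nat \<times> 'a \<Rightarrow> nat \<times> nat" where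
  "block_key = (\<lambda>(i, j, _). (i, j))"

lemma block_key_simp [simp]: "block_key (i, j, u) = (i, j)"
  by (simp add: block_key_def)

lemma cnf_key_less_irrefl [simp]: "\<not> cnf_key_less k k"
  unfolding cnf_key_less_def by auto

lemma cnf_key_less_trans: "cnf_key_less k k' \<Longrightarrow> cnf_key_less k' k'' \<Longrightarrow> cnf_key_less k k''"
  unfolding cnf_key_less_def by auto

lemma cnf_index_iff: "(i, j) \<in> cnf_index s n \<longleftrightarrow> 1 \<le> i \<and> i \<le> n \<and> 1 \<le> j \<and> j \<le> s i"
  unfolding cnf_index_def by simp

locale cnf =
  fixes d :: "nat \<Rightarrow> 'd rel" and s :: "nat \<Rightarrow> nat" and n m :: nat
  assumes Well_order_d: "\<And>i. 1 \<le> i \<Longrightarrow> i \<le> n \<Longrightarrow> Well_order (d i)"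
    and d_mono: "\<And>i. 1 \<le> i \<Longrightarrow> i < n \<Longrightarrow> (d i, d (Suc i)) \<in> ordLeq"
    and Well_order_cnf_ord: "Well_order (cnf_ord d s n m)"
begin

abbreviation "W \<equiv> cnf_ord d s n m"
abbreviation "F \<equiv> cnf_field d s n m"
abbreviation "J \<equiv> cnf_index s n"

lemma cnf_field_iff:
  "(i, j, u) \<in> F \<longleftrightarrow> (i, j) \<in> J \<and> u \<in> omega_exp_carrier (d i) \<or> i = 0 \<and> 1 \<le> j \<and> j \<le> m \<and> u = (\<lambda>_. 0)"
  unfolding cnf_field_def cnf_index_def by auto

lemma cnf_field_carrier: "(i, j, u) \<in> F \<Longrightarrow> u \<in> omega_exp_carrier (d i)"
  using cnf_field_iff zero_in_omega_exp_carrier by blast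

lemma cnf_ord_iff:
  "((i, j, u), (i', j', v)) \<in> W \<longleftrightarrow> (i, j, u) \<in> F \<and> (i', j', v) \<in> F \<and>
     (cnf_key_less (i, j) (i', j') \<or> (i, j) = (i', j') \<and> (u, v) \<in> omega_exp (d i))"
  unfolding cnf_ord_def by auto

lemma Field_cnf_ord: "Field W = F"
proof
  show "Field W \<subseteq> F" unfolding cnf_ord_def Field_def by auto
next
  show "F \<subseteq> Field W"
  proof
    fix t assume t: "t \<in> F"
    obtain i j u where t_eq: "t = (i, j, u)" by (cases t)
    have "(t, t) \<in> W"
      using t cnf_field_carrier unfolding t_eq cnf_ord_iff by (auto simp: in_omega_exp_iff)
    then show "t \<in> Field W" by (auto simp: Field_def)
  qed
qed

lemma cnf_ord_same_block:
  assumes "(i, j, u) \<in> F" "(i, j, v) \<in> F"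
  shows "((i, j, u), (i, j, v)) \<in> W \<longleftrightarrow> u = v \<or> omega_exp_less (d i) u v"
  using assms cnf_field_carrier unfolding cnf_ord_iff by (auto simp: in_omega_exp_iff)

lemma cnf_ord_key_less:
  "t \<in> F \<Longrightarrow> t' \<in> F \<Longrightarrow> cnf_key_less (block_key t) (block_key t') \<Longrightarrow> (t, t') \<in> W"
  by (cases t, cases t') (simp add: cnf_ord_iff)

lemma cnf_ord_block_key:
  "(t, t') \<in> W \<Longrightarrow> cnf_key_less (block_key t) (block_key t') \<or> block_key t = block_key t'"
  by (cases t, cases t') (auto simp: cnf_ord_iff)

lemma cnf_ord_block_key_between:
  assumes "(t, t') \<in> W" "(t', t'') \<in> W" "block_key t'' = block_key t"
  shows "block_key t' = block_key t"
  using cnf_ord_block_key[OF assms(1)] cnf_ord_block_key[OF assms(2)] assms(3)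
  unfolding cnf_key_less_def by auto

lemma d_ordLeq:
  assumes "1 \<le> i" "i \<le> i'" "i' \<le> n"
  shows "(d i, d i') \<in> ordLeq"
  using assms(2,3)
proof (induction i')
  case 0
  then show ?case using assms(1) by simp
next
  case (Suc k)
  show ?case
  proof (cases "i = Suc k")
    case True
    then show ?thesis using ordLeq_reflexive[OF Well_order_d] assms(1) Suc.prems by simp
  next
    case False
    then have "(d i, d k) \<in> ordLeq" using Suc by simp
    moreover have "(d k, d (Suc k)) \<in> ordLeq" using d_mono False Suc.prems assms(1) by simp
    ultimately show ?thesis by (rule ordLeq_transitive)
  qed
qed

text \<open>Each block order-embeds into \<open>W\<close>, so its order type \<open>\<omega>^{d i}\<close> is well-ordered.\<close>

lemma Well_order_omega_exp:
  assumes ij: "(i, j) \<in> J"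
  shows "Well_order (omega_exp (d i))"
proof -
  let ?B = "{t \<in> F. block_key t = (i, j)}"
  have image: "dir_image (Restr W ?B) (snd \<circ> snd) = omega_exp (d i)"
  proof (intro set_eqI iffI)
    fix p assume "p \<in> dir_image (Restr W ?B) (snd \<circ> snd)"
    then obtain a b where p: "p = (snd (snd a), snd (snd b))" "(a, b) \<in> W"
      and ab: "block_key a = (i, j)" "block_key b = (i, j)"
      unfolding dir_image_def by auto
    then show "p \<in> omega_exp (d i)" by (cases a, cases b) (auto simp: cnf_ord_iff)
  next
    fix p assume p: "p \<in> omega_exp (d i)"
    obtain u v where p_eq: "p = (u, v)" by (cases p)
    have "((i, j, u), (i, j, v)) \<in> Restr W ?B"
      using p ij unfolding p_eq by (auto simp: in_omega_exp_iff cnf_field_iff cnf_ord_iff)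
    then show "p \<in> dir_image (Restr W ?B) (snd \<circ> snd)"
      unfolding dir_image_def p_eq
      by (intro CollectI exI[of _ "(i, j, u)"] exI[of _ "(i, j, v)"]) simp
  qed
  have "inj_on (snd \<circ> snd) ?B"
    by (rule inj_onI) (auto simp: block_key_def split: prod.splits)
  then have "inj_on (snd \<circ> snd) (Field (Restr W ?B))"
    by (rule inj_on_subset) (auto simp: Field_def)
  then have "Well_order (dir_image (Restr W ?B) (snd \<circ> snd))"
    by (rule Well_order_dir_image[OF Well_order_Restr[OF Well_order_cnf_ord]])
  then show ?thesis by (simp only: image)
qed

lemma strict_incr_on_cnf_field:
  "strict_incr_on W f \<Longrightarrow> t \<in> F \<Longrightarrow> f t \<in> F"
  using strict_incr_onD(1) by (fastforce simp: Field_cnf_ord)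

lemma strict_incr_on_cnf_ord_mono:
  assumes f: "strict_incr_on W f" and "(t, t') \<in> W"
  shows "(f t, f t') \<in> W"
proof -
  have t: "t \<in> Field W" "t' \<in> Field W" using assms(2) by (auto simp: Field_def)
  show ?thesis
  proof (cases "t = t'")
    case True
    then show ?thesis using Well_order_refl[OF Well_order_cnf_ord strict_incr_onD(1)[OF f t(1)]] by simp
  next
    case False
    then show ?thesis using strict_incr_onD(2)[OF f t assms(2)] by simp
  qed
qed

lemma strict_incr_on_cnf_ord_strict:
  assumes f: "strict_incr_on W f" and "(t, t') \<in> W" "t \<noteq> t'"
  shows "(f t, f t') \<in> W" "f t \<noteq> f t'"
proof -
  have t: "t \<in> Field W" "t' \<in> Field W" using assms(2) by (auto simp: Field_def)
  show "(f t, f t') \<in> W" "f t \<noteq> f t'" using strict_incr_onD(2,3)[OF f t assms(2,3)] by auto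
qed

text \<open>A strictly increasing \<open>f\<close> cannot push \<open>x\<close> beyond the start \<open>y\<close> of a later block that
  \<open>f\<close> keeps in place: otherwise the tail of the block of \<open>x\<close>, a copy of \<open>\<omega>^{d i}\<close>, would be
  mapped strictly increasingly below \<open>f y\<close> into a block \<open>\<omega>^{d i'}\<close> with \<open>i' \<le> i\<close>.\<close>

lemma strict_incr_on_no_block_jump:
  assumes f: "strict_incr_on W f" and x: "x \<in> F" and y: "y \<in> F"
    and xy: "cnf_key_less (block_key x) (block_key y)" and y_fx: "(y, f x) \<in> W"
    and fy: "block_key (f y) = block_key y"
  shows False
proof -
  obtain i j u where x_eq: "x = (i, j, u)" by (cases x)
  obtain i' j' v where y_eq: "y = (i', j', v)" by (cases y)
  obtain b where fy_eq: "f y = (i', j', b)" using fy y_eq by (cases "f y") auto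
  note fF = strict_incr_on_cnf_field[OF f]
  have "x \<noteq> y" using xy by auto
  then have fx_fy: "(f x, f y) \<in> W" "f x \<noteq> f y"
    using strict_incr_on_cnf_ord_strict[OF f cnf_ord_key_less[OF x y xy]] by auto
  have key_fx: "block_key (f x) = (i', j')"
    using cnf_ord_block_key_between[OF y_fx fx_fy(1)] fy y_eq by simp
  have "f x \<in> F" "f y \<in> F" using fF x y by auto
  then have i': "1 \<le> i'"
    using fx_fy(2) key_fx fy_eq by (cases "f x") (auto simp: cnf_field_iff cnf_index_iff)
  then have ij: "(i, j) \<in> J" and i'j': "(i', j') \<in> J" and "i' \<le> i"
    using x y xy unfolding x_eq y_eq by (auto simp: cnf_field_iff cnf_key_less_def cnf_index_iff)
  then have i'_i: "(d i', d i) \<in> ordLeq" using d_ordLeq[OF i'] by (simp add: cnf_index_iff)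
  have d_i: "Well_order (d i)" and d_i': "Well_order (d i')"
    using Well_order_d ij i'j' by (auto simp: cnf_index_iff)
  have u: "u \<in> omega_exp_carrier (d i)" using x x_eq cnf_field_carrier by simp
  have b: "b \<in> omega_exp_carrier (d i')" using fF[OF y] fy_eq cnf_field_carrier by simp
  define z where "z w = (i, j, \<lambda>t. u t + w t)" for w
  define g where "g w = snd (snd (f (z w)))" for w
  have zF: "z w \<in> F" if "w \<in> omega_exp_carrier (d i)" for w
    using ij add_in_omega_exp_carrier[OF u that] unfolding z_def cnf_field_iff by simp
  have fz: "f (z w) = (i', j', g w)" "(i', j', g w) \<in> F" "omega_exp_less (d i') (g w) b"
    if w: "w \<in> omega_exp_carrier (d i)" for w
  proof -
    have "(x, z w) \<in> W"
      using cnf_ord_same_block[OF x[unfolded x_eq] zF[OF w, unfolded z_def]] omega_exp_le_add[OF d_i u w]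
      unfolding x_eq z_def by (auto simp: in_omega_exp_iff)
    then have fx_fz: "(f x, f (z w)) \<in> W" by (rule strict_incr_on_cnf_ord_mono[OF f])
    have "cnf_key_less (block_key (z w)) (block_key y)" using xy unfolding x_eq z_def by simp
    then have "(z w, y) \<in> W" "z w \<noteq> y" using cnf_ord_key_less[OF zF[OF w] y] by auto
    then have fz_fy: "(f (z w), f y) \<in> W" "f (z w) \<noteq> f y"
      by (rule strict_incr_on_cnf_ord_strict[OF f])+
    have "block_key (f (z w)) = (i', j')"
      using cnf_ord_block_key_between[OF fx_fz fz_fy(1)] key_fx fy_eq by simp
    then show fz_eq: "f (z w) = (i', j', g w)" unfolding g_def by (cases "f (z w)") simp
    show fzF: "(i', j', g w) \<in> F" using fF[OF zF[OF w]] fz_eq by simp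
    show "omega_exp_less (d i') (g w) b"
      using cnf_ord_same_block[OF fzF fF[OF y, unfolded fy_eq]] fz_fy fz_eq fy_eq by simp
  qed
  have "\<exists>w\<in>omega_exp_carrier (d i). \<not> omega_exp_less (d i') (g w) b"
  proof (rule omega_exp_strict_mono_unbounded[OF Well_order_omega_exp[OF ij] d_i' d_i i'_i _ _ b])
    show "g w \<in> omega_exp_carrier (d i')" if "w \<in> omega_exp_carrier (d i)" for w
      using fz(2)[OF that] by (rule cnf_field_carrier)
    fix w w' assume w: "w \<in> omega_exp_carrier (d i)" "w' \<in> omega_exp_carrier (d i)"
      and ww': "omega_exp_less (d i) w w'"
    have less: "omega_exp_less (d i) (\<lambda>t. u t + w t) (\<lambda>t. u t + w' t)"
      using omega_exp_less_add_left[OF ww'] .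
    then have "(z w, z w') \<in> W"
      using cnf_ord_same_block[OF zF[OF w(1), unfolded z_def] zF[OF w(2), unfolded z_def]]
      unfolding z_def by simp
    moreover have "z w \<noteq> z w'" using less unfolding z_def by auto
    ultimately have "(f (z w), f (z w')) \<in> W" "f (z w) \<noteq> f (z w')"
      by (rule strict_incr_on_cnf_ord_strict[OF f])+
    then show "omega_exp_less (d i') (g w) (g w')"
      using cnf_ord_same_block[OF fz(2)[OF w(1)] fz(2)[OF w(2)]] fz(1)[OF w(1)] fz(1)[OF w(2)] by auto
  qed
  then show False using fz(3) by blast
qed

lemma finite_block_keys: "finite (block_key ` F)"
proof (rule finite_subset)
  show "block_key ` F \<subseteq> (SIGMA i:{..n}. {..m + s i})"
    by (auto simp: cnf_field_def)
qed auto

text \<open>Induction from the last block backwards, measured by the number of later blocks.\<close>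

lemma strict_incr_on_block_key:
  assumes f: "strict_incr_on W f"
  shows "x \<in> F \<Longrightarrow> block_key (f x) = block_key x"
proof (induction x rule: measure_induct_rule[where f = "\<lambda>t. card {k \<in> block_key ` F. cnf_key_less (block_key t) k}"])
  case (less x)
  let ?later = "\<lambda>t. {k \<in> block_key ` F. cnf_key_less (block_key t) k}"
  show ?case
  proof (rule ccontr)
    assume moved: "block_key (f x) \<noteq> block_key x"
    have "(x, f x) \<in> W" using strict_incr_on_inflationary[OF Well_order_cnf_ord f] less.prems
      by (simp add: Field_cnf_ord)
    then have x_fx: "cnf_key_less (block_key x) (block_key (f x))"
      using cnf_ord_block_key moved by metis
    let ?T = "{t \<in> F. cnf_key_less (block_key x) (block_key t)}"
    have "f x \<in> ?T" using x_fx strict_incr_onD(1)[OF f] less.prems by (simp add: Field_cnf_ord)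
    moreover have "?T \<subseteq> Field W" by (auto simp: Field_cnf_ord)
    ultimately obtain y where y: "y \<in> ?T" and y_least: "\<And>t. t \<in> ?T \<Longrightarrow> (y, t) \<in> W"
      using Well_order_has_least[OF Well_order_cnf_ord, of ?T] by blast
    have "?later y \<subseteq> ?later x" using y cnf_key_less_trans by blast
    moreover have "block_key y \<in> ?later x - ?later y" using y by auto
    ultimately have "?later y \<subset> ?later x" by blast
    then have "card (?later y) < card (?later x)"
      using finite_block_keys by (simp add: psubset_card_mono)
    then have "block_key (f y) = block_key y" using less.IH y by blast
    then show False
      using strict_incr_on_no_block_jump[OF f less.prems _ _ y_least[OF \<open>f x \<in> ?T\<close>]] y by blast
  qed
qed

lemma final_point_in_copy:
  assumes C: "C \<in> copies W" and j: "1 \<le> j" "j \<le> m"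
  shows "(0, j, \<lambda>_. 0) \<in> C"
proof -
  obtain f where f: "strict_incr_on W f" and C_eq: "C = f ` F"
    using C unfolding copies_def Field_cnf_ord by auto
  have t: "(0, j, \<lambda>_. 0) \<in> F" using j by (simp add: cnf_field_iff)
  then have "f (0, j, \<lambda>_. 0) = (0, j, \<lambda>_. 0)"
    using strict_incr_on_block_key[OF f t] strict_incr_on_cnf_field[OF f t]
    by (cases "f (0, j, \<lambda>_. 0)") (simp add: cnf_field_iff cnf_index_iff)
  then show ?thesis using t C_eq by force
qed

lemma strict_incr_on_block:
  assumes f: "strict_incr_on W f" and ij: "(i, j) \<in> J"
  defines "g \<equiv> \<lambda>w. snd (snd (f (i, j, w)))"
  shows "strict_incr_on (omega_exp (d i)) g"
    and "{w. (i, j, w) \<in> f ` F} = g ` omega_exp_carrier (d i)"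
proof -
  have in_F: "(i, j, w) \<in> F \<longleftrightarrow> w \<in> omega_exp_carrier (d i)" for w
    using ij by (auto simp: cnf_field_iff cnf_index_iff)
  have fg: "f (i, j, w) = (i, j, g w)" "g w \<in> omega_exp_carrier (d i)"
    if "w \<in> omega_exp_carrier (d i)" for w
  proof -
    have w: "(i, j, w) \<in> F" using that in_F by simp
    show "f (i, j, w) = (i, j, g w)"
      using strict_incr_on_block_key[OF f w] unfolding g_def by (cases "f (i, j, w)") simp
    then show "g w \<in> omega_exp_carrier (d i)"
      using strict_incr_on_cnf_field[OF f w] in_F by simp
  qed
  show "strict_incr_on (omega_exp (d i)) g"
    unfolding strict_incr_on_omega_exp_iff
  proof (intro conjI ballI impI)
    fix w w' assume w: "w \<in> omega_exp_carrier (d i)" "w' \<in> omega_exp_carrier (d i)"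
      and "omega_exp_less (d i) w w'"
    then have "((i, j, w), (i, j, w')) \<in> W" "(i, j, w) \<noteq> (i, j, w')"
      using cnf_ord_same_block in_F by auto
    then have "(f (i, j, w), f (i, j, w')) \<in> W" "f (i, j, w) \<noteq> f (i, j, w')"
      by (rule strict_incr_on_cnf_ord_strict[OF f])+
    then show "omega_exp_less (d i) (g w) (g w')"
      using cnf_ord_same_block fg w in_F by auto
  qed (use fg in simp)
  show "{w. (i, j, w) \<in> f ` F} = g ` omega_exp_carrier (d i)"
  proof (intro set_eqI iffI)
    fix w assume "w \<in> {w. (i, j, w) \<in> f ` F}"
    then obtain t where t: "t \<in> F" "f t = (i, j, w)" by auto
    obtain i' j' w' where t_eq: "t = (i', j', w')" by (cases t)
    have "(i', j') = (i, j)" using strict_incr_on_block_key[OF f t(1)] t t_eq by simp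
    then show "w \<in> g ` omega_exp_carrier (d i)" using t t_eq fg in_F by force
  next
    fix w assume "w \<in> g ` omega_exp_carrier (d i)"
    then show "w \<in> {w. (i, j, w) \<in> f ` F}" using fg in_F by (force simp: image_iff)
  qed
qed

definition block_sections :: "(nat \<times> nat \<times> ('d \<Rightarrow> nat)) set \<Rightarrow> nat \<times> nat \<Rightarrow> ('d \<Rightarrow> nat) set" where
  "block_sections C = (\<lambda>k\<in>J. {w. (fst k, snd k, w) \<in> C})"

lemma block_sections_in_copies:
  assumes "C \<in> copies W"
  shows "block_sections C \<in> PiE J (\<lambda>(i, j). copies (omega_exp (d i)))"
proof -
  obtain f where f: "strict_incr_on W f" and C_eq: "C = f ` F"
    using assms unfolding copies_def Field_cnf_ord by auto
  have "{w. (i, j, w) \<in> C} \<in> copies (omega_exp (d i))" if "(i, j) \<in> J" for i j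
    using strict_incr_on_block[OF f that] unfolding C_eq copies_def Field_omega_exp by blast
  then show ?thesis unfolding block_sections_def by auto
qed

lemma copies_subset_iff_block_sections:
  assumes C: "C \<in> copies W" and C': "C' \<in> copies W"
  shows "C \<subseteq> C' \<longleftrightarrow> prod_le J (\<lambda>_. (\<subseteq>)) (block_sections C) (block_sections C')"
proof
  assume "C \<subseteq> C'"
  then show "prod_le J (\<lambda>_. (\<subseteq>)) (block_sections C) (block_sections C')"
    unfolding prod_le_def block_sections_def by auto
next
  assume le: "prod_le J (\<lambda>_. (\<subseteq>)) (block_sections C) (block_sections C')"
  show "C \<subseteq> C'"
  proof
    fix t assume t: "t \<in> C"
    obtain i j w where t_eq: "t = (i, j, w)" by (cases t)
    have "t \<in> F" using copies_subset_Field[OF C, unfolded Field_cnf_ord] t by blast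
    then consider "(i, j) \<in> J" | "i = 0" "1 \<le> j" "j \<le> m" "w = (\<lambda>_. 0)"
      unfolding t_eq cnf_field_iff by blast
    then show "t \<in> C'"
    proof cases
      case 1
      then show ?thesis using le t unfolding t_eq prod_le_def block_sections_def by fastforce
    next
      case 2
      then show ?thesis using final_point_in_copy[OF C'] t_eq by simp
    qed
  qed
qed

definition block_glue :: "(nat \<times> nat \<Rightarrow> ('d \<Rightarrow> nat) \<Rightarrow> ('d \<Rightarrow> nat)) \<Rightarrow>
    nat \<times> nat \<times> ('d \<Rightarrow> nat) \<Rightarrow> nat \<times> nat \<times> ('d \<Rightarrow> nat)" where
  "block_glue G = (\<lambda>(i, j, w). if (i, j) \<in> J then (i, j, G (i, j) w) else (i, j, w))"

lemma strict_incr_on_block_glue: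
  assumes G: "\<And>i j. (i, j) \<in> J \<Longrightarrow> strict_incr_on (omega_exp (d i)) (G (i, j))"
  shows "strict_incr_on W (block_glue G)"
proof -
  have G_carrier: "G (i, j) w \<in> omega_exp_carrier (d i)"
    if "(i, j) \<in> J" "w \<in> omega_exp_carrier (d i)" for i j w
    using G[OF that(1)] that(2) unfolding strict_incr_on_omega_exp_iff by blast
  have G_less: "omega_exp_less (d i) (G (i, j) w) (G (i, j) w')"
    if "(i, j) \<in> J" "w \<in> omega_exp_carrier (d i)" "w' \<in> omega_exp_carrier (d i)"
      "omega_exp_less (d i) w w'" for i j w w'
    using G[OF that(1)] that(2-) unfolding strict_incr_on_omega_exp_iff by blast
  have glue_F: "block_glue G t \<in> F" and glue_key: "block_key (block_glue G t) = block_key t"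
    if "t \<in> F" for t
    using that G_carrier by (auto simp: block_glue_def cnf_field_iff cnf_index_iff split: prod.splits)
  show ?thesis
    unfolding strict_incr_on_def Field_cnf_ord
  proof (rule conjI; intro ballI impI)
    fix t assume "t \<in> F" then show "block_glue G t \<in> F" by (rule glue_F)
  next
    fix t t' assume t: "t \<in> F" "t' \<in> F" and tt': "(t, t') \<in> W \<and> t \<noteq> t'"
    obtain i j w where t_eq: "t = (i, j, w)" by (cases t)
    obtain i' j' w' where t'_eq: "t' = (i', j', w')" by (cases t')
    consider "cnf_key_less (i, j) (i', j')" | "(i, j) = (i', j')" "(i, j) \<in> J" | "(i, j) = (i', j')" "(i, j) \<notin> J"
      using cnf_ord_block_key[of t t'] tt' t_eq t'_eq by auto
    then show "(block_glue G t, block_glue G t') \<in> W \<and> block_glue G t \<noteq> block_glue G t'"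
    proof cases
      case 1
      then have "cnf_key_less (block_key (block_glue G t)) (block_key (block_glue G t'))"
        using glue_key t t_eq t'_eq by simp
      then show ?thesis using cnf_ord_key_less[OF glue_F[OF t(1)] glue_F[OF t(2)]] by auto
    next
      case 2
      have glue_eq: "block_glue G t = (i, j, G (i, j) w)" "block_glue G t' = (i, j, G (i, j) w')"
        using 2 unfolding t_eq t'_eq block_glue_def by auto
      have "omega_exp_less (d i) w w'" "w \<in> omega_exp_carrier (d i)" "w' \<in> omega_exp_carrier (d i)"
        using cnf_ord_same_block t tt' cnf_field_carrier 2 unfolding t_eq t'_eq by auto
      then have "omega_exp_less (d i) (G (i, j) w) (G (i, j) w')" using G_less 2 by blast
      then show ?thesis
        using cnf_ord_same_block[OF glue_F[OF t(1), unfolded glue_eq(1)] glue_F[OF t(2), unfolded glue_eq(2)]]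
        unfolding glue_eq by auto
    next
      case 3
      then show ?thesis using tt' t_eq t'_eq unfolding block_glue_def by auto
    qed
  qed
qed

lemma block_sections_block_glue:
  assumes G: "\<And>i j. (i, j) \<in> J \<Longrightarrow> strict_incr_on (omega_exp (d i)) (G (i, j))"
  shows "block_sections (block_glue G ` F) = (\<lambda>k\<in>J. G k ` omega_exp_carrier (d (fst k)))"
  unfolding block_sections_def
proof (rule restrict_ext)
  fix k assume k: "k \<in> J"
  obtain i j where k_eq: "k = (i, j)" by (cases k)
  have "{w. (i, j, w) \<in> block_glue G ` F} = G (i, j) ` omega_exp_carrier (d i)"
  proof -
    have "block_glue G (i, j, w) = (i, j, G (i, j) w)" for w
      using k k_eq by (simp add: block_glue_def)
    then show ?thesis
      using strict_incr_on_block(2)[OF strict_incr_on_block_glue[OF G] k[unfolded k_eq]] by simp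
  qed
  then show "{w. (fst k, snd k, w) \<in> block_glue G ` F} = G k ` omega_exp_carrier (d (fst k))"
    using k_eq by simp
qed

theorem copies_cnf_ord_iso:
  "pre_iso (copies W) (\<subseteq>) (PiE J (\<lambda>(i, j). copies (omega_exp (d i)))) (prod_le J (\<lambda>_. (\<subseteq>)))"
proof -
  have "block_sections ` copies W = PiE J (\<lambda>(i, j). copies (omega_exp (d i)))"
  proof
    show "block_sections ` copies W \<subseteq> PiE J (\<lambda>(i, j). copies (omega_exp (d i)))"
      using block_sections_in_copies by blast
  next
    show "PiE J (\<lambda>(i, j). copies (omega_exp (d i))) \<subseteq> block_sections ` copies W"
    proof
      fix X assume X: "X \<in> PiE J (\<lambda>(i, j). copies (omega_exp (d i)))"
      then have "\<forall>k\<in>J. \<exists>g. strict_incr_on (omega_exp (d (fst k))) g \<and> X k = g ` omega_exp_carrier (d (fst k))"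
        unfolding copies_def Field_omega_exp by (fastforce dest: PiE_mem)
      then obtain G where G: "\<And>k. k \<in> J \<Longrightarrow> strict_incr_on (omega_exp (d (fst k))) (G k) \<and>
          X k = G k ` omega_exp_carrier (d (fst k))"
        by (metis (no_types) bchoice)
      then have G': "strict_incr_on (omega_exp (d i)) (G (i, j))" if "(i, j) \<in> J" for i j
        using that by fastforce
      have "X = (\<lambda>k\<in>J. G k ` omega_exp_carrier (d (fst k)))"
        using X G by (intro ext) (auto simp: PiE_iff extensional_def)
      then have "X = block_sections (block_glue G ` F)"
        using block_sections_block_glue[OF G'] by simp
      moreover have "block_glue G ` F \<in> copies W"
        using strict_incr_on_block_glue[OF G'] unfolding copies_def Field_cnf_ord by blast
      ultimately show "X \<in> block_sections ` copies W" by blast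
    qed
  qed
  moreover have "inj_on block_sections (copies W)"
  proof (rule inj_onI)
    fix C C' assume C: "C \<in> copies W" "C' \<in> copies W" and eq: "block_sections C = block_sections C'"
    then have "C \<subseteq> C'" "C' \<subseteq> C"
      using copies_subset_iff_block_sections[OF C] copies_subset_iff_block_sections[OF C(2,1)]
      by (simp_all add: prod_le_def)
    then show "C = C'" by (rule subset_antisym)
  qed
  ultimately show ?thesis
    unfolding pre_iso_def bij_betw_def using copies_subset_iff_block_sections by blast
qed

end

text \<open>Only the monotonicity of the exponents enters the proof.\<close>

theorem mainTheorem2:
  fixes r :: "'a rel" and d :: "nat \<Rightarrow> 'd rel" and s :: "nat \<Rightarrow> nat" and n m :: nat
  assumes r_wo: "Well_order r"
    and d_wo: "\<And>i. 1 \<le> i \<Longrightarrow> i \<le> n \<Longrightarrow> Well_order (d i)"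
    and n_pos: "1 \<le> n"
    and s_pos: "\<And>i. 1 \<le> i \<Longrightarrow> i \<le> n \<Longrightarrow> 1 \<le> s i"
    and d1_pos: "Field (d 1) \<noteq> {}"
    and d_incr: "\<And>i. 1 \<le> i \<Longrightarrow> i < n \<Longrightarrow> (d i, d (Suc i)) \<in> ordLess"
    and r_cnf: "(r, cnf_ord d s n m) \<in> ordIso"
  shows "pre_iso (copies r) (\<subseteq>)
           (prod_carrier (cnf_index s n) (\<lambda>(i, j). copies (omega_exp (d i))))
           (prod_le (cnf_index s n) (\<lambda>_. (\<subseteq>)))
       \<and> pre_iso (copies r) (sm_le (copies r) (\<subseteq>))
           (prod_carrier (cnf_index s n) (\<lambda>(i, j). copies (omega_exp (d i))))
           (prod_le (cnf_index s n) (\<lambda>(i, j). sm_le (copies (omega_exp (d i))) (\<subseteq>)))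
       \<and> pre_iso (sq_carrier (copies r) (\<subseteq>)) (sq_le (copies r) (\<subseteq>))
           (prod_carrier (cnf_index s n) (\<lambda>(i, j). sq_carrier (copies (omega_exp (d i))) (\<subseteq>)))
           (prod_le (cnf_index s n) (\<lambda>(i, j). sq_le (copies (omega_exp (d i))) (\<subseteq>)))"
proof -
  obtain h where h: "iso r (cnf_ord d s n m) h" and W: "Well_order (cnf_ord d s n m)"
    using r_cnf unfolding ordIso_def by blast
  interpret cnf d s n m
    using d_wo d_incr W by unfold_locales (auto intro: ordLess_imp_ordLeq)
  define P where "P = (\<lambda>(i::nat, j::nat). copies (omega_exp (d i)))"
  have pre: "\<And>k. carrier_preorder (P k) (\<subseteq>)" by (rule carrier_preorder_subset)
  have copies_prod: "pre_iso (copies r) (\<subseteq>) (PiE J P) (prod_le J (\<lambda>_. (\<subseteq>)))"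
    using pre_iso_trans[OF copies_iso[OF h] copies_cnf_ord_iso] unfolding P_def .
  have sm: "pre_iso (copies r) (sm_le (copies r) (\<subseteq>)) (PiE J P) (prod_le J (\<lambda>k. sm_le (P k) (\<subseteq>)))"
    using pre_iso_trans[OF pre_iso_sm[OF copies_prod] pre_iso_sm_prod[of J P "\<lambda>_. (\<subseteq>)"]] by simp
  have sq: "pre_iso (sq_carrier (copies r) (\<subseteq>)) (sq_le (copies r) (\<subseteq>))
      (PiE J (\<lambda>k. sq_carrier (P k) (\<subseteq>))) (prod_le J (\<lambda>k. sq_le (P k) (\<subseteq>)))"
    using pre_iso_trans[OF pre_iso_sq[OF copies_prod carrier_preorder_subset carrier_preorder_prod[OF pre]]
        pre_iso_sq_prod[OF pre]] .
  show ?thesis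
    using copies_prod sm sq unfolding prod_carrier_def P_def split_def by blast
qed

end
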